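(* Let $\boldsymbol{\mathcal{D}} = \begin{pmatrix}\boldsymbol{W}_p\\ \boldsymbol{U}_f \\ \boldsymbol{Y}_f\end{pmatrix}$ be a data matrix with full row rank and LQ decomposition as described in the context, let $\boldsymbol{Z}:=\begin{pmatrix}\boldsymbol{W}_p\\ \boldsymbol{U}_f\end{pmatrix}$, $\boldsymbol{\Pi}:=\boldsymbol{Z}^+\boldsymbol{Z}$, $\boldsymbol{\Pi}_\perp:=\boldsymbol{I}-\boldsymbol{\Pi}$, and $\lambda_a>0$. Then $\boldsymbol{\gamma}$-DDPC with regularization $\tilde h(\boldsymbol{\gamma}) = \lambda_a \|\boldsymbol{\gamma}_2\|_2^2$ and the additional constraint $\boldsymbol{\gamma}_3 = \boldsymbol{0}$ is equivalent to DeePC with regularization $h(\boldsymbol{a}) = \lambda_a \|\boldsymbol{\Pi}\boldsymbol{a}\|_2^2$ (or, alternatively, $h(\boldsymbol{a}) = \lambda_a \|\boldsymbol{a}\|_2^2$) and the additional constraint $\boldsymbol{\Pi}_\perp \boldsymbol{a} = \boldsymbol{0}$. Furthermore, both schemes are equivalent to SPC with the additional regularization $h^\ast(\boldsymbol{\xi}, \mathbf{u}_f, \mathbf{y}_f) = \lambda_a \|\mathbf{u}_f-\boldsymbol{U}_f \boldsymbol{W}_p^+\boldsymbol{\xi}\|_{\boldsymbol{\mathcal{R}}_\text{reg}}^2$, where $\boldsymbol{\mathcal{R}}_\text{reg} :=\left(\boldsymbol{U}_f\left(\boldsymbol{I}-\boldsymbol{W}_p^+\boldsymbol{W}_p\r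ight)\boldsymbol{U}_f^\top\right)^{-1}$.
   Context: $\boldsymbol{M}^+$ denotes the Moore–Penrose pseudoinverse and $\|\boldsymbol{x}\|_{\boldsymbol{M}}^2 := \boldsymbol{x}^\top\boldsymbol{M}\boldsymbol{x}$. Data: $m$ inputs, $p$ outputs, past horizon $N_p$, future horizon $N_f$, $L=N_p+N_f$, and $\ell$ data trajectories. The data matrix $\boldsymbol{\mathcal{D}}\in\mathbb{R}^{L(m+p)\times\ell}$ has blocks $\boldsymbol{W}_p\in\mathbb{R}^{N_p(m+p)\times\ell}$ (past inputs and outputs), $\boldsymbol{U}_f\in\mathbb{R}^{mN_f\times \ell}$, $\boldsymbol{Y}_f\in\mathbb{R}^{pN_f\times\ell}$ and is assumed to have full row rank. Its LQ decomposition is $\boldsymbol{\mathcal{D}} = \begin{pmatrix} \boldsymbol{L}_{11} & \boldsymbol{0} & \boldsymbol{0} & \boldsymbol{0} \\ \boldsymbol{L}_{21} & \boldsymbol{L}_{22} & \boldsymbol{0} & \boldsymbol{0} \\ \boldsymbol{L}_{31} & \boldsymbol{L}_{32} & \boldsymbol{L}_{33} & \boldsymbol{0} \end{pmatrix}\begin{pmatrix}\boldsymbol{Q}_1\\ \boldsymbol{Q}_2\\ \boldsymbol{Q}_3\\ \boldsymbol{Q}_4\end{pmatrix}$, with non-singular square diagonal blocks $\boldsymbol{L}_{11},\boldsymbol{L}_{22},\boldsymbol{L}_{33}$ (of sizes matching $\boldsymbol{W}_p,\boldsymbol{U}_f,\boldsymbol{Y}_f$) and $\boldsymbol{Q}=\begin{pmatrix}\boldsymbol{Q}_1^\top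 & \boldsymbol{Q}_2^\top&\boldsymbol{Q}_3^\top&\boldsymbol{Q}_4^\top\end{pmatrix}^\top\in\mathbb{R}^{\ell\times\ell}$ orthogonal; $\boldsymbol{\gamma}_i := \boldsymbol{Q}_i\boldsymbol{a}$. Given current past I/O data $\boldsymbol{\xi}\in\mathbb{R}^{N_p(m+p)}$, a cost $J(\boldsymbol{\xi},\mathbf{u}_f,\mathbf{y}_f)$ and constraint sets $\mathcal{U}$, $\mathcal{Y}$: DeePC with regularization $h$ is the problem $\min_{\mathbf{u}_f,\mathbf{y}_f,\boldsymbol{a}} J(\boldsymbol{\xi},\mathbf{u}_f,\mathbf{y}_f)+h(\boldsymbol{a})$ s.t. $(\boldsymbol{\xi};\mathbf{u}_f;\mathbf{y}_f)=\boldsymbol{\mathcal{D}}\boldsymbol{a}$, $(\mathbf{u}_f,\mathbf{y}_f)\in\mathcal{U}\times\mathcal{Y}$ (plus any stated additional constraint on $\boldsymbol{a}$). $\boldsymbol{\gamma}$-DDPC with regularization $\tilde h$ is the problem $\min_{\mathbf{u}_f,\mathbf{y}_f,\boldsymbol{\gamma}_2,\boldsymbol{\gamma}_3} J(\boldsymbol{\xi},\mathbf{u}_f,\mathbf{y}_f)+\tilde h(\boldsymbol{\gamma})$ s.t. $\boldsymbol{\gamma}_1=\boldsymbol{L}_{11}^{-1}\boldsymbol{\xi}$, $\mathbf{u}_f = \boldsymbol{L}_{21}\boldsymbol{\gamma}_1+\boldsymbol{L}_{22}\boldsymbol{\gamma}_2$, $\mathbf{y}_f=\boldsymbol{L}_{31}\boldsymbol{\gamma}_1+\boldsymbol{L}_{32}\boldsymbol{\gamma}_2+\boldsymbol{L}_{33}\boldsymbol{\gamma}_3$,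 $(\mathbf{u}_f,\mathbf{y}_f)\in\mathcal{U}\times\mathcal{Y}$ (i.e., $\boldsymbol{\gamma}_4=\boldsymbol{0}$ is fixed), plus any stated additional constraint on the $\boldsymbol{\gamma}_i$. SPC with additional regularization $h^\ast$ is the problem $\min_{\mathbf{u}_f,\mathbf{y}_f} J(\boldsymbol{\xi},\mathbf{u}_f,\mathbf{y}_f)+h^\ast(\boldsymbol{\xi},\mathbf{u}_f,\mathbf{y}_f)$ s.t. $\mathbf{y}_f = \boldsymbol{K}_{\text{SPC}}\begin{pmatrix}\boldsymbol{\xi}\\ \mathbf{u}_f\end{pmatrix}$, $(\mathbf{u}_f,\mathbf{y}_f)\in\mathcal{U}\times\mathcal{Y}$, where $\boldsymbol{K}_{\text{SPC}} := \boldsymbol{Y}_f\boldsymbol{Z}^+$ (the minimizer of $\|\boldsymbol{Y}_f-\boldsymbol{K}\boldsymbol{Z}\|_F^2$). Two such optimal control problems are called equivalent if, for every $\boldsymbol{\xi}$, they yield the same optimal predicted input/output trajectories $(\mathbf{u}_f^\ast,\mathbf{y}_f^\ast)$ (not necessarily the same optimal cost). *)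

theory Defs
  imports "Jordan_Normal_Form.DL_Rank"
begin

definition pinv :: "real mat \<Rightarrow> real mat" where
  "pinv A = (THE X. X \<in> carrier_mat (dim_col A) (dim_row A) \<and>
              A * X * A = A \<and> X * A * X = X \<and>
              transpose_mat (A * X) = A * X \<and> transpose_mat (X * A) = X * A)"

definition minv :: "real mat \<Rightarrow> real mat" where
  "minv A = (THE B. B \<in> carrier_mat (dim_row A) (dim_row A) \<and>
              A * B = 1\<^sub>m (dim_row A) \<and> B * A = 1\<^sub>m (dim_row A))"

definition full_row_rank :: "real mat \<Rightarrow> bool" where
  "full_row_rank A \<longleftrightarrow> vec_space.rank (dim_row A) A = dim_row A"

definition sqnorm :: "real vec \<Rightarrow> real" where
  "sqnorm x = x \<bullet> x"

definition wsqnorm :: "real mat \<Rightarrow> real vec \<Rightarrow> real" where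
  "wsqnorm M x = x \<bullet> (M *\<^sub>v x)"

definition row_block :: "real mat \<Rightarrow> nat \<Rightarrow> nat \<Rightarrow> real mat" where
  "row_block Q off k = mat k (dim_col Q) (\<lambda>(i, j). Q $$ (i + off, j))"

(* Set of optimal predicted trajectories (u_f^opt, y_f^opt) of an optimal control problem with
   decision variable z, feasibility predicate feas, objective f, and output map out. *)
definition opt_traj :: "('z \<Rightarrow> bool) \<Rightarrow> ('z \<Rightarrow> real) \<Rightarrow> ('z \<Rightarrow> 'o) \<Rightarrow> 'o set" where
  "opt_traj feas f out = out ` {z. feas z \<and> (\<forall>z'. feas z' \<longrightarrow> f z \<le> f z')}"

(* DeePC with regularization h and additional constraint C on a.
   Decision variables (u_f, y_f, a); (xi; u_f; y_f) = D a is written blockwise. *)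
definition deepc_opt ::
  "real mat \<Rightarrow> real mat \<Rightarrow> real mat \<Rightarrow>
   (real vec \<Rightarrow> real vec \<Rightarrow> real vec \<Rightarrow> real) \<Rightarrow> real vec set \<Rightarrow> real vec set \<Rightarrow>
   (real vec \<Rightarrow> real) \<Rightarrow> (real vec \<Rightarrow> bool) \<Rightarrow> real vec \<Rightarrow> (real vec \<times> real vec) set" where
  "deepc_opt Wp Uf Yf J Uc Yc h C xi =
     opt_traj
       (\<lambda>(u, y, a). a \<in> carrier_vec (dim_col Wp) \<and>
          xi = Wp *\<^sub>v a \<and> u = Uf *\<^sub>v a \<and> y = Yf *\<^sub>v a \<and> u \<in> Uc \<and> y \<in> Yc \<and> C a)
       (\<lambda>(u, y, a). J xi u y + h a)
       (\<lambda>(u, y, a). (u, y))"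

(* gamma-DDPC with regularization ht (a function of gamma_1, gamma_2, gamma_3; gamma_4 = 0 fixed)
   and additional constraint C on (gamma_2, gamma_3). Decision variables (u_f, y_f, gamma_2, gamma_3). *)
definition gamma_ddpc_opt ::
  "real mat \<Rightarrow> real mat \<Rightarrow> real mat \<Rightarrow> real mat \<Rightarrow> real mat \<Rightarrow> real mat \<Rightarrow>
   (real vec \<Rightarrow> real vec \<Rightarrow> real vec \<Rightarrow> real) \<Rightarrow> real vec set \<Rightarrow> real vec set \<Rightarrow>
   (real vec \<Rightarrow> real vec \<Rightarrow> real vec \<Rightarrow> real) \<Rightarrow> (real vec \<Rightarrow> real vec \<Rightarrow> bool) \<Rightarrow>
   real vec \<Rightarrow> (real vec \<times> real vec) set" where
  "gamma_ddpc_opt L11 L21 L22 L31 L32 L33 J Uc Yc ht C xi =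
     (let g1 = minv L11 *\<^sub>v xi in
      opt_traj
       (\<lambda>(u, y, g2, g3). g2 \<in> carrier_vec (dim_col L22) \<and> g3 \<in> carrier_vec (dim_col L33) \<and>
          u = L21 *\<^sub>v g1 + L22 *\<^sub>v g2 \<and>
          y = L31 *\<^sub>v g1 + L32 *\<^sub>v g2 + L33 *\<^sub>v g3 \<and> u \<in> Uc \<and> y \<in> Yc \<and> C g2 g3)
       (\<lambda>(u, y, g2, g3). J xi u y + ht g1 g2 g3)
       (\<lambda>(u, y, g2, g3). (u, y)))"

definition spc_opt ::
  "real mat \<Rightarrow> real mat \<Rightarrow> real mat \<Rightarrow>
   (real vec \<Rightarrow> real vec \<Rightarrow> real vec \<Rightarrow> real) \<Rightarrow> real vec set \<Rightarrow> real vec set \<Rightarrow>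
   (real vec \<Rightarrow> real vec \<Rightarrow> real vec \<Rightarrow> real) \<Rightarrow> real vec \<Rightarrow> (real vec \<times> real vec) set" where
  "spc_opt Wp Uf Yf J Uc Yc hs xi =
     (let K = Yf * pinv (Wp @\<^sub>r Uf) in
      opt_traj
       (\<lambda>(u, y). u \<in> carrier_vec (dim_row Uf) \<and>
          y = K *\<^sub>v (xi @\<^sub>v u) \<and> u \<in> Uc \<and> y \<in> Yc)
       (\<lambda>(u, y). J xi u y + hs xi u y)
       (\<lambda>(u, y). (u, y)))"

end

theory Submission
  imports Defs
begin

(* With gamma = Q a, the LQ structure gives W_p a = L11 gamma_1, U_f a = L21 gamma_1 + L22 gamma_2 and
   Y_f a = L31 gamma_1 + L32 gamma_2 + L33 gamma_3. As L11 and L22 are invertible, Z = L_Z (Q1; Q2) with L_Z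
   invertible and (Q1; Q2) having orthonormal rows, so Pi = Q1^T Q1 + Q2^T Q2: the constraint Pi_perp a = 0
   says gamma_3 = gamma_4 = 0. Likewise W_p^+ = Q1^T L11^-1, hence U_f W_p^+ xi = L21 gamma_1 and
   R_reg = (L22 L22^T)^-1. With gamma_1 = L11^-1 xi fixed by the data, all three problems therefore become the
   same problem in gamma_2: DeePC because ||Pi a||^2 = ||a||^2 = ||gamma_1||^2 + ||gamma_2||^2 on its feasible
   set, SPC because its input u determines gamma_2 = L22^-1 (u - L21 gamma_1), with
   ||u - U_f W_p^+ xi||^2_R_reg = ||gamma_2||^2, and its predictor returns L31 gamma_1 + L32 gamma_2. *)

lemma zero_mat_mult_vec [simp]:
  "v \<in> carrier_vec nc \<Longrightarrow> 0\<^sub>m nr nc *\<^sub>v v = (0\<^sub>v nr :: 'a :: semiring_0 vec)"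
  by (intro eq_vecI) (auto simp: mult_mat_vec_def)

lemma mult_mat_vec_zero [simp]:
  "A \<in> carrier_mat nr nc \<Longrightarrow> A *\<^sub>v 0\<^sub>v nc = (0\<^sub>v nr :: 'a :: semiring_0 vec)"
  by (intro eq_vecI) (auto simp: mult_mat_vec_def)

lemma diff_eq_zero_vec_iff:
  fixes v w :: "'a :: group_add vec"
  assumes "v \<in> carrier_vec n" "w \<in> carrier_vec n"
  shows "v - w = 0\<^sub>v n \<longleftrightarrow> v = w"
  using assms by (auto simp: vec_eq_iff)

lemma minv_eqI:
  assumes A: "A \<in> carrier_mat n n" and B: "B \<in> carrier_mat n n"
    and AB: "A * B = 1\<^sub>m n" and BA: "B * A = 1\<^sub>m n"
  shows "minv A = B"
  unfolding minv_def
proof (rule the_equality)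
  fix C assume "C \<in> carrier_mat (dim_row A) (dim_row A) \<and>
    A * C = 1\<^sub>m (dim_row A) \<and> C * A = 1\<^sub>m (dim_row A)"
  then have C: "C \<in> carrier_mat n n" and CA: "C * A = 1\<^sub>m n" using A by auto
  have "C = (C * A) * B" using A B C AB by simp
  then show "C = B" using B CA by simp
qed (use A B AB BA in auto)

lemma invertible_minv:
  fixes A :: "real mat"
  assumes A: "A \<in> carrier_mat n n" and inv: "invertible_mat A"
  shows "minv A \<in> carrier_mat n n" "A * minv A = 1\<^sub>m n" "minv A * A = 1\<^sub>m n"
    and "X \<in> carrier_mat n k \<Longrightarrow> A * (minv A * X) = X"
    and "X \<in> carrier_mat n k \<Longrightarrow> minv A * (A * X) = X"
    and "v \<in> carrier_vec n \<Longrightarrow> A *\<^sub>v (minv A *\<^sub>v v) = v"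
    and "v \<in> carrier_vec n \<Longrightarrow> minv A *\<^sub>v (A *\<^sub>v v) = v"
proof -
  obtain B where AB: "A * B = 1\<^sub>m n" and BA: "B * A = 1\<^sub>m (dim_row B)"
    using inv A unfolding invertible_mat_def inverts_mat_def by auto
  have B: "B \<in> carrier_mat n n"
    using arg_cong[OF AB, of dim_col] arg_cong[OF BA, of dim_col] A by auto
  then have "minv A = B" using minv_eqI[OF A B AB] BA by simp
  then show Ainv: "minv A \<in> carrier_mat n n" "A * minv A = 1\<^sub>m n" "minv A * A = 1\<^sub>m n"
    using B AB BA by auto
  show "X \<in> carrier_mat n k \<Longrightarrow> A * (minv A * X) = X"
    using A Ainv by (simp flip: assoc_mult_mat[of A n n "minv A" n X k])
  show "X \<in> carrier_mat n k \<Longrightarrow> minv A * (A * X) = X"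
    using A Ainv by (simp flip: assoc_mult_mat[of "minv A" n n A n X k])
  show "v \<in> carrier_vec n \<Longrightarrow> A *\<^sub>v (minv A *\<^sub>v v) = v"
    using A Ainv by (simp flip: assoc_mult_mat_vec[of A n n "minv A" n v])
  show "v \<in> carrier_vec n \<Longrightarrow> minv A *\<^sub>v (A *\<^sub>v v) = v"
    using A Ainv by (simp flip: assoc_mult_mat_vec[of "minv A" n n A n v])
qed

lemma pinv_eqI:
  fixes A R :: "real mat"
  assumes A: "A \<in> carrier_mat n l" and R: "R \<in> carrier_mat l n"
    and AR: "A * R = 1\<^sub>m n" and RA_sym: "transpose_mat (R * A) = R * A"
  shows "pinv A = R"
  unfolding pinv_def
proof (rule the_equality)
  fix X assume "X \<in> carrier_mat (dim_col A) (dim_row A) \<and> A * X * A = A \<and> X * A * X = X \<and>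
      transpose_mat (A * X) = A * X \<and> transpose_mat (X * A) = X * A"
  then have X: "X \<in> carrier_mat l n" and AXA: "A * X * A = A" and XAX: "X * A * X = X"
    and XA_sym: "transpose_mat (X * A) = X * A"
    using A by auto
  have AX: "A * X = 1\<^sub>m n"
  proof -
    have "A * X = A * X * (A * R)" using A X AR by simp
    also have "\<dots> = (A * X * A) * R"
      by (subst assoc_mult_mat[of "A * X" n n A l R n]) (use A R X in auto)
    finally show ?thesis using AXA AR by simp
  qed
  have XA_RA: "X * A = X * A * (R * A)"
  proof -
    have "X * A = X * (A * R) * A" using A R X AR by simp
    also have "\<dots> = X * A * (R * A)"
      using A R X by (simp add: assoc_mult_mat[of X l n "A * R" n A l]
          assoc_mult_mat[of X l n A l "R * A" l] assoc_mult_mat[of A n l R n A l])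
    finally show ?thesis .
  qed
  have "X * A = transpose_mat (X * A * (R * A))"
    using XA_sym arg_cong[OF XA_RA, of transpose_mat] by simp
  also have "\<dots> = R * A * (X * A)"
    using A R X RA_sym XA_sym by (simp add: transpose_mult[of "X * A" l l "R * A" l])
  also have "\<dots> = R * (A * X) * A"
    using A R X by (simp add: assoc_mult_mat[of R l n A l "X * A" l]
        assoc_mult_mat[of R l n "A * X" n A l] assoc_mult_mat[of A n l X n A l])
  finally have XA: "X * A = R * A" using AX R by simp
  have "X = R * A * X" using XAX XA by simp
  then show "X = R" using A R X AX by (simp add: assoc_mult_mat[of R l n A l X n])
qed (use A R AR RA_sym in auto)

lemma pinv_mult_orthonormal_rows:
  fixes L S :: "real mat"
  assumes L: "L \<in> carrier_mat n n" "invertible_mat L"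
    and S: "S \<in> carrier_mat n l" and orth: "S * transpose_mat S = 1\<^sub>m n"
  shows "pinv (L * S) = transpose_mat S * minv L"
    and "pinv (L * S) * (L * S) = transpose_mat S * S"
proof -
  note M = invertible_minv[OF L]
  have St: "transpose_mat S \<in> carrier_mat l n" using S by simp
  have right_inv: "L * S * (transpose_mat S * minv L) = 1\<^sub>m n"
  proof -
    have "L * S * (transpose_mat S * minv L) = L * ((S * transpose_mat S) * minv L)"
      using L S St M by (simp add: assoc_mult_mat[of L n n S l "transpose_mat S * minv L" n]
          assoc_mult_mat[of S n l "transpose_mat S" n "minv L" n])
    then show ?thesis using orth L M by simp
  qed
  have left_prod: "transpose_mat S * minv L * (L * S) = transpose_mat S * S"
  proof -
    have "transpose_mat S * minv L * (L * S) = transpose_mat S * ((minv L * L) * S)"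
      using L S St M by (simp add: assoc_mult_mat[of "transpose_mat S" l n "minv L" n "L * S" l]
          assoc_mult_mat[of "minv L" n n L n S l])
    then show ?thesis using S M by simp
  qed
  have "transpose_mat (transpose_mat S * S) = transpose_mat S * S"
    using S by (simp add: transpose_mult[of "transpose_mat S" l n S l])
  then show inv: "pinv (L * S) = transpose_mat S * minv L"
    using L S St M right_inv left_prod by (intro pinv_eqI[of _ n l]) auto
  show "pinv (L * S) * (L * S) = transpose_mat S * S"
    unfolding inv by (rule left_prod)
qed

lemma minv_mult_transpose:
  fixes A :: "real mat"
  assumes A: "A \<in> carrier_mat n n" "invertible_mat A"
  shows "minv (A * transpose_mat A) = transpose_mat (minv A) * minv A"
proof (rule minv_eqI)
  note M = invertible_minv[OF A]
  have MT: "transpose_mat A * transpose_mat (minv A) = 1\<^sub>m n"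
    using M A by (metis transpose_mult transpose_one)
  have TM: "transpose_mat (minv A) * transpose_mat A = 1\<^sub>m n"
    using M A by (metis transpose_mult transpose_one)
  have "A * transpose_mat A * (transpose_mat (minv A) * minv A)
      = A * ((transpose_mat A * transpose_mat (minv A)) * minv A)"
    using A M by (simp add: assoc_mult_mat[of A n n "transpose_mat A" n "transpose_mat (minv A) * minv A" n]
        assoc_mult_mat[of "transpose_mat A" n n "transpose_mat (minv A)" n "minv A" n])
  then show "A * transpose_mat A * (transpose_mat (minv A) * minv A) = 1\<^sub>m n"
    using MT A M by simp
  have "transpose_mat (minv A) * minv A * (A * transpose_mat A)
      = transpose_mat (minv A) * ((minv A * A) * transpose_mat A)"
    using A M by (simp add: assoc_mult_mat[of "transpose_mat (minv A)" n n "minv A" n "A * transpose_mat A" n]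
        assoc_mult_mat[of "minv A" n n A n "transpose_mat A" n])
  then show "transpose_mat (minv A) * minv A * (A * transpose_mat A) = 1\<^sub>m n"
    using TM A M by simp
qed (use A invertible_minv[OF A] in auto)

lemma wsqnorm_minv_mult_transpose:
  fixes A :: "real mat"
  assumes A: "A \<in> carrier_mat n n" "invertible_mat A" and v: "v \<in> carrier_vec n"
  shows "wsqnorm (minv (A * transpose_mat A)) (A *\<^sub>v v) = sqnorm v"
proof -
  note M = invertible_minv[OF A]
  have "minv (A * transpose_mat A) *\<^sub>v (A *\<^sub>v v) = transpose_mat (minv A) *\<^sub>v v"
    unfolding minv_mult_transpose[OF A] using A M v by simp
  then have "wsqnorm (minv (A * transpose_mat A)) (A *\<^sub>v v) = (transpose_mat (minv A) *\<^sub>v v) \<bullet> (A *\<^sub>v v)"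
    unfolding wsqnorm_def using A M v by (simp add: comm_scalar_prod[of _ n])
  also have "\<dots> = v \<bullet> (minv A *\<^sub>v (A *\<^sub>v v))"
    using A M v by (simp add: transpose_vec_mult_scalar[of "minv A" n n])
  finally show ?thesis unfolding sqnorm_def using M v by simp
qed

lemma four_block_mat_lower_triangular_invertible:
  fixes A C D :: "real mat"
  assumes A: "A \<in> carrier_mat n1 n1" "invertible_mat A"
    and D: "D \<in> carrier_mat n2 n2" "invertible_mat D"
    and C: "C \<in> carrier_mat n2 n1"
  shows "invertible_mat (four_block_mat A (0\<^sub>m n1 n2) C D)"
proof -
  note Ai = invertible_minv[OF A] and Di = invertible_minv[OF D]
  define E where "E = - (minv D * (C * minv A))"
  have CAi: "C * minv A \<in> carrier_mat n2 n1" using C Ai by simp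
  have E: "E \<in> carrier_mat n2 n1" using Di CAi unfolding E_def by auto
  have "D * E = - (C * minv A)"
    unfolding E_def using D Di CAi by simp
  then have "C * minv A + D * E = 0\<^sub>m n2 n1"
    using CAi by (simp add: add_uminus_minus_mat[of _ n2 n1])
  then have right: "four_block_mat A (0\<^sub>m n1 n2) C D * four_block_mat (minv A) (0\<^sub>m n1 n2) E (minv D)
      = 1\<^sub>m (n1 + n2)"
    using A C D Ai Di E by (simp add: mult_four_block_mat[of _ n1 n1 _ n2 _ n2 _ _ n1 _ n2])
  have "E * A + minv D * C = 0\<^sub>m n2 n1"
  proof -
    have "E * A = - (minv D * (C * (minv A * A)))"
      unfolding E_def using A C Ai Di
      by (simp add: assoc_mult_mat[of "minv D" n2 n2 "C * minv A" n1 A n1]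
          assoc_mult_mat[of C n2 n1 "minv A" n1 A n1])
    then show ?thesis using A C Ai Di by simp
  qed
  then have left: "four_block_mat (minv A) (0\<^sub>m n1 n2) E (minv D) * four_block_mat A (0\<^sub>m n1 n2) C D
      = 1\<^sub>m (n1 + n2)"
    using A C D Ai Di E by (simp add: mult_four_block_mat[of _ n1 n1 _ n2 _ n2 _ _ n1 _ n2])
  show ?thesis
    unfolding invertible_mat_def inverts_mat_def using A D Ai Di right left
    by (intro conjI exI[of _ "four_block_mat (minv A) (0\<^sub>m n1 n2) E (minv D)"]) auto
qed

lemma four_block_mat_mult_append_rows:
  assumes A: "A \<in> carrier_mat nr1 n1" and B: "B \<in> carrier_mat nr1 n2"
    and C: "C \<in> carrier_mat nr2 n1" and D: "D \<in> carrier_mat nr2 n2"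
    and E: "E \<in> carrier_mat n1 nc" and F: "F \<in> carrier_mat n2 nc"
  shows "four_block_mat A B C D * (E @\<^sub>r F) = (A * E + B * F) @\<^sub>r (C * E + D * F)"
  using assms unfolding append_rows_def
  by (simp add: mult_four_block_mat[OF A B C D E zero_carrier_mat F zero_carrier_mat])

lemma append_rows_mult_transpose:
  assumes A: "A \<in> carrier_mat nr1 nc" and B: "B \<in> carrier_mat nr2 nc"
    and C: "C \<in> carrier_mat nr3 nc" and D: "D \<in> carrier_mat nr4 nc"
  shows "(A @\<^sub>r B) * transpose_mat (C @\<^sub>r D) = four_block_mat
    (A * transpose_mat C) (A * transpose_mat D) (B * transpose_mat C) (B * transpose_mat D)"
proof -
  have "transpose_mat (C @\<^sub>r D) = four_block_mat
      (transpose_mat C) (transpose_mat D) (0\<^sub>m 0 nr3) (0\<^sub>m 0 nr4)"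
    unfolding append_rows_def using C D by (simp add: transpose_four_block_mat[of _ nr3 nc _ 0 _ nr4])
  then show ?thesis
    unfolding append_rows_def using A B C D
    by (simp add: mult_four_block_mat[of _ nr1 nc _ 0 _ nr2 _ _ nr3 _ nr4])
qed

lemma transpose_append_rows_mult:
  assumes A: "A \<in> carrier_mat n1 nc1" and B: "B \<in> carrier_mat n2 nc1"
    and C: "C \<in> carrier_mat n1 nc2" and D: "D \<in> carrier_mat n2 nc2"
  shows "transpose_mat (A @\<^sub>r B) * (C @\<^sub>r D) = transpose_mat A * C + transpose_mat B * D"
proof -
  have "transpose_mat (A @\<^sub>r B) = four_block_mat
      (transpose_mat A) (transpose_mat B) (0\<^sub>m 0 n1) (0\<^sub>m 0 n2)"
    unfolding append_rows_def using A B by (simp add: transpose_four_block_mat[of _ n1 nc1 _ 0 _ n2])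
  then have "transpose_mat (A @\<^sub>r B) * (C @\<^sub>r D) = four_block_mat
      (transpose_mat A * C + transpose_mat B * D) (0\<^sub>m nc1 0) (0\<^sub>m 0 nc2) (0\<^sub>m 0 0)"
    unfolding append_rows_def using A B C D
    by (simp add: mult_four_block_mat[of _ nc1 n1 _ n2 _ 0 _ _ nc2 _ 0])
  also have "\<dots> = transpose_mat A * C + transpose_mat B * D"
    using A B C D by (intro eq_matI) auto
  finally show ?thesis .
qed

lemma row_block_mult_transpose:
  fixes Q :: "real mat"
  assumes Q: "Q \<in> carrier_mat r c" and orth: "Q * transpose_mat Q = 1\<^sub>m r"
    and k1: "o1 + k1 \<le> r" and k2: "o2 + k2 \<le> r"
  shows "row_block Q o1 k1 * transpose_mat (row_block Q o2 k2)
    = mat k1 k2 (\<lambda>(i, j). if i + o1 = j + o2 then 1 else 0)"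
proof (rule eq_matI)
  fix i j assume "i < dim_row (mat k1 k2 (\<lambda>(i, j). if i + o1 = j + o2 then 1 else (0::real)))"
    and "j < dim_col (mat k1 k2 (\<lambda>(i, j). if i + o1 = j + o2 then 1 else (0::real)))"
  then have i: "i < k1" and j: "j < k2" by auto
  have "(row_block Q o1 k1 * transpose_mat (row_block Q o2 k2)) $$ (i, j)
      = (Q * transpose_mat Q) $$ (i + o1, j + o2)"
    using Q i j k1 k2 by (simp add: row_block_def scalar_prod_def)
  then show "(row_block Q o1 k1 * transpose_mat (row_block Q o2 k2)) $$ (i, j)
      = mat k1 k2 (\<lambda>(i, j). if i + o1 = j + o2 then 1 else 0) $$ (i, j)"
    using orth i j k1 k2 by simp
qed (auto simp: row_block_def)

lemma row_block_orthonormal: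
  fixes Q :: "real mat"
  assumes "Q \<in> carrier_mat r c" "Q * transpose_mat Q = 1\<^sub>m r" "off + k \<le> r"
  shows "row_block Q off k * transpose_mat (row_block Q off k) = 1\<^sub>m k"
  using row_block_mult_transpose[OF assms assms(3)] by auto

lemma row_blocks_orthogonal:
  fixes Q :: "real mat"
  assumes "Q \<in> carrier_mat r c" "Q * transpose_mat Q = 1\<^sub>m r" "o1 + k1 \<le> o2" "o2 + k2 \<le> r"
  shows "row_block Q o2 k2 * transpose_mat (row_block Q o1 k1) = 0\<^sub>m k2 k1"
  using row_block_mult_transpose[of Q r c o2 k2 o1 k1] assms by auto

lemma opt_traj_eqI:
  assumes to2: "\<And>z. feas1 z \<Longrightarrow> feas2 (\<phi> z) \<and> out2 (\<phi> z) = out1 z \<and> f1 z = f2 (\<phi> z) + c"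
    and to1: "\<And>w. feas2 w \<Longrightarrow> feas1 (\<psi> w) \<and> out1 (\<psi> w) = out2 w \<and> f1 (\<psi> w) = f2 w + c"
  shows "opt_traj feas1 f1 out1 = opt_traj feas2 f2 out2"
  unfolding opt_traj_def
proof (intro equalityI subsetI)
  fix o1 assume "o1 \<in> out1 ` {z. feas1 z \<and> (\<forall>z'. feas1 z' \<longrightarrow> f1 z \<le> f1 z')}"
  then obtain z where z: "feas1 z" "\<forall>z'. feas1 z' \<longrightarrow> f1 z \<le> f1 z'" and o1: "o1 = out1 z"
    by auto
  have "\<forall>w. feas2 w \<longrightarrow> f2 (\<phi> z) \<le> f2 w"
    using z to2[OF z(1)] to1 by fastforce
  then show "o1 \<in> out2 ` {w. feas2 w \<and> (\<forall>w'. feas2 w' \<longrightarrow> f2 w \<le> f2 w')}"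
    using to2[OF z(1)] o1 by (intro image_eqI[of _ _ "\<phi> z"]) auto
next
  fix o2 assume "o2 \<in> out2 ` {w. feas2 w \<and> (\<forall>w'. feas2 w' \<longrightarrow> f2 w \<le> f2 w')}"
  then obtain w where w: "feas2 w" "\<forall>w'. feas2 w' \<longrightarrow> f2 w \<le> f2 w'" and o2: "o2 = out2 w"
    by auto
  have "\<forall>z. feas1 z \<longrightarrow> f1 (\<psi> w) \<le> f1 z"
    using w to1[OF w(1)] to2 by fastforce
  then show "o2 \<in> out1 ` {z. feas1 z \<and> (\<forall>z'. feas1 z' \<longrightarrow> f1 z \<le> f1 z')}"
    using to1[OF w(1)] o2 by (intro image_eqI[of _ _ "\<psi> w"]) auto
qed

locale lq_factorization =
  fixes nw nu ny l :: nat
    and Q1 Q2 Q3 L11 L21 L22 L31 L32 L33 Wp Uf Yf :: "real mat"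
  assumes Q1_carrier: "Q1 \<in> carrier_mat nw l" and Q2_carrier: "Q2 \<in> carrier_mat nu l"
    and Q3_carrier: "Q3 \<in> carrier_mat ny l"
    and Q1_Q1T: "Q1 * transpose_mat Q1 = 1\<^sub>m nw" and Q2_Q2T: "Q2 * transpose_mat Q2 = 1\<^sub>m nu"
    and Q2_Q1T: "Q2 * transpose_mat Q1 = 0\<^sub>m nu nw"
    and Q3_Q1T: "Q3 * transpose_mat Q1 = 0\<^sub>m ny nw"
    and Q3_Q2T: "Q3 * transpose_mat Q2 = 0\<^sub>m ny nu"
    and L11: "L11 \<in> carrier_mat nw nw" "invertible_mat L11"
    and L22: "L22 \<in> carrier_mat nu nu" "invertible_mat L22"
    and L21: "L21 \<in> carrier_mat nu nw" and L31: "L31 \<in> carrier_mat ny nw"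
    and L32: "L32 \<in> carrier_mat ny nu" and L33: "L33 \<in> carrier_mat ny ny"
    and Wp_eq: "Wp = L11 * Q1" and Uf_eq: "Uf = L21 * Q1 + L22 * Q2"
    and Yf_eq: "Yf = L31 * Q1 + L32 * Q2 + L33 * Q3"
begin

lemma Q1_Q2T: "Q1 * transpose_mat Q2 = 0\<^sub>m nw nu"
  using arg_cong[OF Q2_Q1T, of transpose_mat] Q1_carrier Q2_carrier
  by (simp add: transpose_mult[of Q2 nu l "transpose_mat Q1" nw])

lemma data_carrier: "Wp \<in> carrier_mat nw l" "Uf \<in> carrier_mat nu l" "Yf \<in> carrier_mat ny l"
  unfolding Wp_eq Uf_eq Yf_eq
  using Q1_carrier Q2_carrier Q3_carrier L11 L21 L22 L31 L32 L33 by auto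

lemma data_mult_Q1T:
  "Wp * transpose_mat Q1 = L11" "Uf * transpose_mat Q1 = L21" "Yf * transpose_mat Q1 = L31"
  unfolding Wp_eq Uf_eq Yf_eq
  using Q1_carrier Q2_carrier Q3_carrier L11 L21 L22 L31 L32 L33 Q1_Q1T Q2_Q1T Q3_Q1T
  by (simp_all add: add_mult_distrib_mat[of "L21 * Q1" nu l "L22 * Q2" "transpose_mat Q1" nw]
      add_mult_distrib_mat[of "L31 * Q1 + L32 * Q2" ny l "L33 * Q3" "transpose_mat Q1" nw]
      add_mult_distrib_mat[of "L31 * Q1" ny l "L32 * Q2" "transpose_mat Q1" nw])

lemma data_mult_Q2T:
  "Wp * transpose_mat Q2 = 0\<^sub>m nw nu" "Uf * transpose_mat Q2 = L22" "Yf * transpose_mat Q2 = L32"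
  unfolding Wp_eq Uf_eq Yf_eq
  using Q1_carrier Q2_carrier Q3_carrier L11 L21 L22 L31 L32 L33 Q1_Q2T Q2_Q2T Q3_Q2T
  by (simp_all add: add_mult_distrib_mat[of "L21 * Q1" nu l "L22 * Q2" "transpose_mat Q2" nu]
      add_mult_distrib_mat[of "L31 * Q1 + L32 * Q2" ny l "L33 * Q3" "transpose_mat Q2" nu]
      add_mult_distrib_mat[of "L31 * Q1" ny l "L32 * Q2" "transpose_mat Q2" nu])

(* a = Q^T gamma with gamma_3 = gamma_4 = 0 *)
definition a_of_gamma :: "real vec \<Rightarrow> real vec \<Rightarrow> real vec" where
  "a_of_gamma g1 g2 = transpose_mat Q1 *\<^sub>v g1 + transpose_mat Q2 *\<^sub>v g2"

lemma a_of_gamma_carrier: "a_of_gamma g1 g2 \<in> carrier_vec l"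
  unfolding a_of_gamma_def using Q2_carrier by (intro carrier_vecI) simp

lemma mult_a_of_gamma:
  assumes "X \<in> carrier_mat k l" "g1 \<in> carrier_vec nw" "g2 \<in> carrier_vec nu"
  shows "X *\<^sub>v a_of_gamma g1 g2 = (X * transpose_mat Q1) *\<^sub>v g1 + (X * transpose_mat Q2) *\<^sub>v g2"
  unfolding a_of_gamma_def using assms Q1_carrier Q2_carrier
  by (simp add: mult_add_distrib_mat_vec[of X k l])

lemma a_of_gamma_coordinates:
  assumes g1: "g1 \<in> carrier_vec nw" and g2: "g2 \<in> carrier_vec nu"
  shows "Q1 *\<^sub>v a_of_gamma g1 g2 = g1" "Q2 *\<^sub>v a_of_gamma g1 g2 = g2"
    and "Wp *\<^sub>v a_of_gamma g1 g2 = L11 *\<^sub>v g1"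
    and "Uf *\<^sub>v a_of_gamma g1 g2 = L21 *\<^sub>v g1 + L22 *\<^sub>v g2"
    and "Yf *\<^sub>v a_of_gamma g1 g2 = L31 *\<^sub>v g1 + L32 *\<^sub>v g2"
  using g1 g2 Q1_carrier Q2_carrier data_carrier L11 L21 L22 L31 L32
  by (simp_all add: mult_a_of_gamma[OF _ g1 g2] Q1_Q1T Q1_Q2T Q2_Q1T Q2_Q2T
      data_mult_Q1T data_mult_Q2T)

lemma sqnorm_a_of_gamma:
  assumes g1: "g1 \<in> carrier_vec nw" and g2: "g2 \<in> carrier_vec nu"
  shows "sqnorm (a_of_gamma g1 g2) = sqnorm g1 + sqnorm g2"
proof -
  let ?a = "a_of_gamma g1 g2"
  have "sqnorm ?a = (transpose_mat Q1 *\<^sub>v g1) \<bullet> ?a + (transpose_mat Q2 *\<^sub>v g2) \<bullet> ?a"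
    unfolding sqnorm_def
    by (subst (1) a_of_gamma_def, rule add_scalar_prod_distrib[of _ l])
      (use Q1_carrier Q2_carrier g1 g2 a_of_gamma_carrier in auto)
  also have "\<dots> = g1 \<bullet> (Q1 *\<^sub>v ?a) + g2 \<bullet> (Q2 *\<^sub>v ?a)"
    using Q1_carrier Q2_carrier a_of_gamma_carrier g1 g2
    by (simp add: transpose_vec_mult_scalar[of Q1 nw l] transpose_vec_mult_scalar[of Q2 nu l])
  finally show ?thesis unfolding sqnorm_def using a_of_gamma_coordinates[OF g1 g2] by simp
qed

lemma Z_factorization: "Wp @\<^sub>r Uf = four_block_mat L11 (0\<^sub>m nw nu) L21 L22 * (Q1 @\<^sub>r Q2)"
  using Q1_carrier Q2_carrier L11 L21 L22 unfolding Wp_eq Uf_eq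
  by (simp add: four_block_mat_mult_append_rows[of _ nw nw _ nu _ nu _ _ l])

lemma Q12_orthonormal: "(Q1 @\<^sub>r Q2) * transpose_mat (Q1 @\<^sub>r Q2) = 1\<^sub>m (nw + nu)"
  using Q1_carrier Q2_carrier Q1_Q1T Q1_Q2T Q2_Q1T Q2_Q2T
  by (simp add: append_rows_mult_transpose[of _ nw l _ nu _ nw _ nu])

lemma projector_eq: "pinv (Wp @\<^sub>r Uf) * (Wp @\<^sub>r Uf) = transpose_mat Q1 * Q1 + transpose_mat Q2 * Q2"
  and pinv_Z_carrier: "pinv (Wp @\<^sub>r Uf) \<in> carrier_mat l (nw + nu)"
proof -
  have LZ: "four_block_mat L11 (0\<^sub>m nw nu) L21 L22 \<in> carrier_mat (nw + nu) (nw + nu)"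
    "invertible_mat (four_block_mat L11 (0\<^sub>m nw nu) L21 L22)"
    using L11 L21 L22 four_block_mat_lower_triangular_invertible by auto
  have S: "Q1 @\<^sub>r Q2 \<in> carrier_mat (nw + nu) l" using Q1_carrier Q2_carrier by auto
  note pinv = pinv_mult_orthonormal_rows[OF LZ S Q12_orthonormal, folded Z_factorization]
  show "pinv (Wp @\<^sub>r Uf) * (Wp @\<^sub>r Uf) = transpose_mat Q1 * Q1 + transpose_mat Q2 * Q2"
    unfolding pinv(2) by (rule transpose_append_rows_mult[OF Q1_carrier Q2_carrier Q1_carrier Q2_carrier])
  show "pinv (Wp @\<^sub>r Uf) \<in> carrier_mat l (nw + nu)"
    unfolding pinv(1) using S invertible_minv(1)[OF LZ] by auto
qed

lemma projector_mult_vec: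
  assumes a: "a \<in> carrier_vec l"
  shows "pinv (Wp @\<^sub>r Uf) * (Wp @\<^sub>r Uf) *\<^sub>v a = a_of_gamma (Q1 *\<^sub>v a) (Q2 *\<^sub>v a)"
  unfolding projector_eq a_of_gamma_def using Q1_carrier Q2_carrier a
  by (simp add: add_mult_distrib_mat_vec[of "transpose_mat Q1 * Q1" l l "transpose_mat Q2 * Q2"])

lemma projector_a_of_gamma:
  assumes "g1 \<in> carrier_vec nw" "g2 \<in> carrier_vec nu"
  shows "pinv (Wp @\<^sub>r Uf) * (Wp @\<^sub>r Uf) *\<^sub>v a_of_gamma g1 g2 = a_of_gamma g1 g2"
  using projector_mult_vec[OF a_of_gamma_carrier] a_of_gamma_coordinates[OF assms] by simp

lemma projector_complement_eq_0_iff: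
  assumes a: "a \<in> carrier_vec l"
  shows "(1\<^sub>m l - pinv (Wp @\<^sub>r Uf) * (Wp @\<^sub>r Uf)) *\<^sub>v a = 0\<^sub>v l
    \<longleftrightarrow> a = a_of_gamma (Q1 *\<^sub>v a) (Q2 *\<^sub>v a)"
proof -
  have "(1\<^sub>m l - pinv (Wp @\<^sub>r Uf) * (Wp @\<^sub>r Uf)) *\<^sub>v a = a - a_of_gamma (Q1 *\<^sub>v a) (Q2 *\<^sub>v a)"
    using a pinv_Z_carrier data_carrier
    by (simp add: minus_mult_distrib_mat_vec[of _ l l] projector_mult_vec)
  then show ?thesis
    using diff_eq_zero_vec_iff[OF a a_of_gamma_carrier] by simp
qed

lemma row_space_eq_a_of_gamma:
  assumes a: "a \<in> carrier_vec l"
    and perp: "(1\<^sub>m l - pinv (Wp @\<^sub>r Uf) * (Wp @\<^sub>r Uf)) *\<^sub>v a = 0\<^sub>v l"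
  shows "a = a_of_gamma (minv L11 *\<^sub>v (Wp *\<^sub>v a)) (Q2 *\<^sub>v a)"
proof -
  have row_space: "a = a_of_gamma (Q1 *\<^sub>v a) (Q2 *\<^sub>v a)"
    using perp projector_complement_eq_0_iff[OF a] by simp
  have q: "Q1 *\<^sub>v a \<in> carrier_vec nw" "Q2 *\<^sub>v a \<in> carrier_vec nu"
    using a Q1_carrier Q2_carrier by auto
  have "Wp *\<^sub>v a = L11 *\<^sub>v (Q1 *\<^sub>v a)"
    using arg_cong[OF row_space, of "\<lambda>v. Wp *\<^sub>v v"] a_of_gamma_coordinates(3)[OF q] by (rule trans)
  then have "Q1 *\<^sub>v a = minv L11 *\<^sub>v (Wp *\<^sub>v a)" using invertible_minv(7)[OF L11 q(1)] by simp
  then show ?thesis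
    using row_space by (rule subst[where P = "\<lambda>v. a = a_of_gamma v (Q2 *\<^sub>v a)"])
qed

lemma pinv_Wp: "pinv Wp = transpose_mat Q1 * minv L11"
  and pinv_Wp_mult_Wp: "pinv Wp * Wp = transpose_mat Q1 * Q1"
  using pinv_mult_orthonormal_rows[OF L11 Q1_carrier Q1_Q1T] unfolding Wp_eq by simp_all

lemma Uf_mult_pinv_Wp: "Uf * pinv Wp = L21 * minv L11"
  using data_carrier Q1_carrier invertible_minv(1)[OF L11]
  by (simp add: pinv_Wp data_mult_Q1T flip: assoc_mult_mat[of Uf nu l "transpose_mat Q1" nw "minv L11" nw])

lemma Uf_mult_complement: "Uf * (1\<^sub>m l - pinv Wp * Wp) = L22 * Q2"
proof -
  have "Uf * (1\<^sub>m l - pinv Wp * Wp) = Uf - Uf * transpose_mat Q1 * Q1"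
    unfolding pinv_Wp_mult_Wp using data_carrier Q1_carrier
    by (simp add: mult_minus_distrib_mat[of Uf nu l "1\<^sub>m l" l "transpose_mat Q1 * Q1"]
        assoc_mult_mat[of Uf nu l "transpose_mat Q1" nw Q1 l])
  also have "\<dots> = L22 * Q2"
    unfolding data_mult_Q1T using Uf_eq Q1_carrier Q2_carrier L21 L22 by auto
  finally show ?thesis .
qed

lemma R_reg_eq: "minv (Uf * (1\<^sub>m l - pinv Wp * Wp) * transpose_mat Uf) = minv (L22 * transpose_mat L22)"
proof -
  have "Uf * (1\<^sub>m l - pinv Wp * Wp) * transpose_mat Uf = L22 * transpose_mat (Uf * transpose_mat Q2)"
    unfolding Uf_mult_complement using data_carrier Q2_carrier L22
    by (simp add: transpose_mult[of Uf nu l])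
  then show ?thesis unfolding data_mult_Q2T by simp
qed

lemma spc_predictor:
  assumes g1: "g1 \<in> carrier_vec nw" and g2: "g2 \<in> carrier_vec nu"
  shows "Yf * pinv (Wp @\<^sub>r Uf) *\<^sub>v ((L11 *\<^sub>v g1) @\<^sub>v (L21 *\<^sub>v g1 + L22 *\<^sub>v g2))
    = L31 *\<^sub>v g1 + L32 *\<^sub>v g2"
proof -
  \<comment> \<open>the argument is Z a for a in the row space of Z, on which Z^+ Z is the identity\<close>
  let ?a = "a_of_gamma g1 g2"
  have "(L11 *\<^sub>v g1) @\<^sub>v (L21 *\<^sub>v g1 + L22 *\<^sub>v g2) = (Wp @\<^sub>r Uf) *\<^sub>v ?a"
    using data_carrier a_of_gamma_carrier a_of_gamma_coordinates[OF g1 g2]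
    by (simp add: mat_mult_append)
  moreover have Za: "(Wp @\<^sub>r Uf) *\<^sub>v ?a \<in> carrier_vec (nw + nu)"
    by (rule mult_mat_vec_carrier[OF carrier_append_rows[OF data_carrier(1,2)] a_of_gamma_carrier])
  ultimately have "Yf * pinv (Wp @\<^sub>r Uf) *\<^sub>v ((L11 *\<^sub>v g1) @\<^sub>v (L21 *\<^sub>v g1 + L22 *\<^sub>v g2))
      = Yf *\<^sub>v (pinv (Wp @\<^sub>r Uf) * (Wp @\<^sub>r Uf) *\<^sub>v ?a)"
    using data_carrier pinv_Z_carrier a_of_gamma_carrier Za
    by (simp add: assoc_mult_mat_vec[of "pinv (Wp @\<^sub>r Uf)" l "nw + nu" "Wp @\<^sub>r Uf" l]
        assoc_mult_mat_vec[of Yf ny l "pinv (Wp @\<^sub>r Uf)" "nw + nu"])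
  also have "\<dots> = L31 *\<^sub>v g1 + L32 *\<^sub>v g2"
    unfolding projector_a_of_gamma[OF g1 g2] a_of_gamma_coordinates[OF g1 g2] ..
  finally show ?thesis .
qed

lemma deepc_row_space_eq_gamma_ddpc:
  assumes xi: "xi \<in> carrier_vec nw"
    and h: "\<And>g1 g2. g1 \<in> carrier_vec nw \<Longrightarrow> g2 \<in> carrier_vec nu \<Longrightarrow>
      h (a_of_gamma g1 g2) = ht g1 g2 (0\<^sub>v ny) + c g1"
  shows "deepc_opt Wp Uf Yf J Uc Yc h
      (\<lambda>a. (1\<^sub>m l - pinv (Wp @\<^sub>r Uf) * (Wp @\<^sub>r Uf)) *\<^sub>v a = 0\<^sub>v l) xi
    = gamma_ddpc_opt L11 L21 L22 L31 L32 L33 J Uc Yc ht (\<lambda>g2 g3. g3 = 0\<^sub>v ny) xi"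
proof -
  define g1 where "g1 = minv L11 *\<^sub>v xi"
  have g1: "g1 \<in> carrier_vec nw" using xi invertible_minv(1)[OF L11] unfolding g1_def by simp
  have xi_eq: "xi = L11 *\<^sub>v g1" using invertible_minv(6)[OF L11 xi] unfolding g1_def by simp
  have y_eq: "L31 *\<^sub>v g1 + L32 *\<^sub>v g2 + L33 *\<^sub>v 0\<^sub>v ny = L31 *\<^sub>v g1 + L32 *\<^sub>v g2"
    if "g2 \<in> carrier_vec nu" for g2
    using that g1 L31 L32 L33 by simp
  show ?thesis
    unfolding deepc_opt_def gamma_ddpc_opt_def Let_def g1_def[symmetric]
  proof (rule opt_traj_eqI[where \<phi> = "\<lambda>(u, y, a). (u, y, Q2 *\<^sub>v a, 0\<^sub>v ny)"
        and \<psi> = "\<lambda>(u, y, g2, g3). (u, y, a_of_gamma g1 g2)" and c = "c g1"], goal_cases)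
    case (1 z)
    obtain u y a where z: "z = (u, y, a)" by (cases z)
    from 1 have a: "a \<in> carrier_vec l" and xi_a: "xi = Wp *\<^sub>v a"
      and uy: "u = Uf *\<^sub>v a" "y = Yf *\<^sub>v a" "u \<in> Uc" "y \<in> Yc"
      and perp: "(1\<^sub>m l - pinv (Wp @\<^sub>r Uf) * (Wp @\<^sub>r Uf)) *\<^sub>v a = 0\<^sub>v l"
      using data_carrier unfolding z by auto
    have q: "Q2 *\<^sub>v a \<in> carrier_vec nu" using a Q2_carrier by auto
    have a_eq: "a = a_of_gamma g1 (Q2 *\<^sub>v a)"
      using row_space_eq_a_of_gamma[OF a perp] unfolding g1_def xi_a .
    show ?case
      unfolding z using uy q L22 L33 h[OF g1 q] y_eq[OF q]
        a_of_gamma_coordinates[OF g1 q, folded a_eq]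
      by (simp add: a_eq[symmetric])
  next
    case (2 w)
    obtain u y g2 g3 where w: "w = (u, y, g2, g3)" by (cases w)
    from 2 have g2: "g2 \<in> carrier_vec nu" and g3: "g3 = 0\<^sub>v ny"
      and uy: "u = L21 *\<^sub>v g1 + L22 *\<^sub>v g2" "y = L31 *\<^sub>v g1 + L32 *\<^sub>v g2 + L33 *\<^sub>v g3" "u \<in> Uc" "y \<in> Yc"
      using L22 unfolding w by auto
    show ?case
      unfolding w using uy g3 xi_eq data_carrier a_of_gamma_carrier a_of_gamma_coordinates[OF g1 g2]
        projector_complement_eq_0_iff[OF a_of_gamma_carrier] h[OF g1 g2] y_eq[OF g2]
      by simp
  qed
qed

lemma deepc_eq_gamma_ddpc:
  assumes xi: "xi \<in> carrier_vec nw"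
  shows "deepc_opt Wp Uf Yf J Uc Yc (\<lambda>a. lambda * sqnorm (pinv (Wp @\<^sub>r Uf) * (Wp @\<^sub>r Uf) *\<^sub>v a))
      (\<lambda>a. (1\<^sub>m l - pinv (Wp @\<^sub>r Uf) * (Wp @\<^sub>r Uf)) *\<^sub>v a = 0\<^sub>v l) xi
    = gamma_ddpc_opt L11 L21 L22 L31 L32 L33 J Uc Yc
        (\<lambda>g1 g2 g3. lambda * sqnorm g2) (\<lambda>g2 g3. g3 = 0\<^sub>v ny) xi"
    and "deepc_opt Wp Uf Yf J Uc Yc (\<lambda>a. lambda * sqnorm a)
      (\<lambda>a. (1\<^sub>m l - pinv (Wp @\<^sub>r Uf) * (Wp @\<^sub>r Uf)) *\<^sub>v a = 0\<^sub>v l) xi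
    = gamma_ddpc_opt L11 L21 L22 L31 L32 L33 J Uc Yc
        (\<lambda>g1 g2 g3. lambda * sqnorm g2) (\<lambda>g2 g3. g3 = 0\<^sub>v ny) xi"
  by (rule deepc_row_space_eq_gamma_ddpc[OF xi, where c = "\<lambda>g1. lambda * sqnorm g1"];
      simp add: projector_a_of_gamma sqnorm_a_of_gamma algebra_simps)+

lemma spc_regularizer_eq:
  assumes xi: "xi \<in> carrier_vec nw" and g2: "g2 \<in> carrier_vec nu"
  shows "wsqnorm (minv (Uf * (1\<^sub>m l - pinv Wp * Wp) * transpose_mat Uf))
      (L21 *\<^sub>v (minv L11 *\<^sub>v xi) + L22 *\<^sub>v g2 - Uf * pinv Wp *\<^sub>v xi) = sqnorm g2"
proof -
  have "Uf * pinv Wp *\<^sub>v xi = L21 *\<^sub>v (minv L11 *\<^sub>v xi)"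
    unfolding Uf_mult_pinv_Wp using L21 invertible_minv(1)[OF L11] xi by simp
  then have "L21 *\<^sub>v (minv L11 *\<^sub>v xi) + L22 *\<^sub>v g2 - Uf * pinv Wp *\<^sub>v xi = L22 *\<^sub>v g2"
    using L21 L22 g2 invertible_minv(1)[OF L11] xi by (auto simp: vec_eq_iff)
  then show ?thesis unfolding R_reg_eq using wsqnorm_minv_mult_transpose[OF L22 g2] by simp
qed

lemma spc_eq_gamma_ddpc:
  assumes xi: "xi \<in> carrier_vec nw"
  shows "spc_opt Wp Uf Yf J Uc Yc (\<lambda>xi' u y. lambda *
        wsqnorm (minv (Uf * (1\<^sub>m l - pinv Wp * Wp) * transpose_mat Uf)) (u - Uf * pinv Wp *\<^sub>v xi')) xi
    = gamma_ddpc_opt L11 L21 L22 L31 L32 L33 J Uc Yc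
        (\<lambda>g1 g2 g3. lambda * sqnorm g2) (\<lambda>g2 g3. g3 = 0\<^sub>v ny) xi"
proof -
  define g1 where "g1 = minv L11 *\<^sub>v xi"
  have g1: "g1 \<in> carrier_vec nw" using xi invertible_minv(1)[OF L11] unfolding g1_def by simp
  have xi_eq: "xi = L11 *\<^sub>v g1" using invertible_minv(6)[OF L11 xi] unfolding g1_def by simp
  have y_eq: "L31 *\<^sub>v g1 + L32 *\<^sub>v g2 + L33 *\<^sub>v 0\<^sub>v ny = L31 *\<^sub>v g1 + L32 *\<^sub>v g2"
    if "g2 \<in> carrier_vec nu" for g2
    using that g1 L31 L32 L33 by simp
  have L21g1: "L21 *\<^sub>v g1 \<in> carrier_vec nu" using L21 g1 by simp
  show ?thesis
    unfolding spc_opt_def gamma_ddpc_opt_def Let_def g1_def[symmetric]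
  proof (rule opt_traj_eqI[where \<phi> = "\<lambda>(u, y). (u, y, minv L22 *\<^sub>v (u - L21 *\<^sub>v g1), 0\<^sub>v ny)"
        and \<psi> = "\<lambda>(u, y, g2, g3). (u, y)" and c = 0], goal_cases)
    case (1 z)
    obtain u y where z: "z = (u, y)" by (cases z)
    from 1 have u: "u \<in> carrier_vec nu"
      and uy: "y = Yf * pinv (Wp @\<^sub>r Uf) *\<^sub>v (xi @\<^sub>v u)" "u \<in> Uc" "y \<in> Yc"
      using data_carrier unfolding z by auto
    define g2 where "g2 = minv L22 *\<^sub>v (u - L21 *\<^sub>v g1)"
    have g2: "g2 \<in> carrier_vec nu" using invertible_minv(1)[OF L22] u L21g1 unfolding g2_def by simp
    have L22g2: "L22 *\<^sub>v g2 = u - L21 *\<^sub>v g1"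
      unfolding g2_def using invertible_minv(6)[OF L22] u L21g1 by simp
    then have u_eq: "u = L21 *\<^sub>v g1 + L22 *\<^sub>v g2"
      using u L21 by (auto simp: vec_eq_iff)
    have pred: "Yf * pinv (Wp @\<^sub>r Uf) *\<^sub>v (xi @\<^sub>v u) = L31 *\<^sub>v g1 + L32 *\<^sub>v g2"
      using spc_predictor[OF g1 g2, folded xi_eq u_eq] .
    have cost: "wsqnorm (minv (Uf * (1\<^sub>m l - pinv Wp * Wp) * transpose_mat Uf))
        (u - Uf * pinv Wp *\<^sub>v xi) = sqnorm g2"
      using spc_regularizer_eq[OF xi g2, folded g1_def, folded u_eq] .
    show ?case
      unfolding z using uy u g1 g2 L22 L31 L32 L33
      by (simp add: g2_def[symmetric] pred cost u_eq[symmetric])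
  next
    case (2 w)
    obtain u y g2 g3 where w: "w = (u, y, g2, g3)" by (cases w)
    from 2 have g2: "g2 \<in> carrier_vec nu" and g3: "g3 = 0\<^sub>v ny"
      and uy: "u = L21 *\<^sub>v g1 + L22 *\<^sub>v g2" "y = L31 *\<^sub>v g1 + L32 *\<^sub>v g2 + L33 *\<^sub>v g3" "u \<in> Uc" "y \<in> Yc"
      using L22 unfolding w by auto
    show ?case
      unfolding w using uy g3 g2 L21g1 L22 data_carrier spc_predictor[OF g1 g2] y_eq[OF g2]
        spc_regularizer_eq[OF xi g2, folded g1_def]
      by (simp add: xi_eq)
  qed
qed

end

theorem proposition6:
  fixes m p Np Nf l :: nat
    and Wp Uf Yf :: "real mat"
    and L11 L21 L22 L31 L32 L33 Q :: "real mat"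
    and J :: "real vec \<Rightarrow> real vec \<Rightarrow> real vec \<Rightarrow> real"
    and Uc Yc :: "real vec set"
    and lambda_a :: real
  defines "nw \<equiv> Np * (m + p)" and "nu \<equiv> m * Nf" and "ny \<equiv> p * Nf"
  defines "D \<equiv> Wp @\<^sub>r Uf @\<^sub>r Yf"
    and "Z \<equiv> Wp @\<^sub>r Uf"
  defines "Proj \<equiv> pinv Z * Z"
  defines "PiPerp \<equiv> 1\<^sub>m l - Proj"
  defines "Q1 \<equiv> row_block Q 0 nw" and "Q2 \<equiv> row_block Q nw nu" and "Q3 \<equiv> row_block Q (nw + nu) ny"
  defines "R_reg \<equiv> minv (Uf * (1\<^sub>m l - pinv Wp * Wp) * transpose_mat Uf)"
  assumes Wp: "Wp \<in> carrier_mat nw l" and Uf: "Uf \<in> carrier_mat nu l" and Yf: "Yf \<in> carrier_mat ny l"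
    and rank: "full_row_rank D"
    and Q: "Q \<in> carrier_mat l l" "Q * transpose_mat Q = 1\<^sub>m l" "nw + nu + ny \<le> l"
    and L11: "L11 \<in> carrier_mat nw nw" "invertible_mat L11"
    and L22: "L22 \<in> carrier_mat nu nu" "invertible_mat L22"
    and L33: "L33 \<in> carrier_mat ny ny" "invertible_mat L33"
    and L21: "L21 \<in> carrier_mat nu nw"
    and L31: "L31 \<in> carrier_mat ny nw" and L32: "L32 \<in> carrier_mat ny nu"
    and LQ: "Wp = L11 * Q1" "Uf = L21 * Q1 + L22 * Q2" "Yf = L31 * Q1 + L32 * Q2 + L33 * Q3"
    and lam: "lambda_a > 0"
  shows "\<forall>xi \<in> carrier_vec nw.
     gamma_ddpc_opt L11 L21 L22 L31 L32 L33 J Uc Yc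
        (\<lambda>g1 g2 g3. lambda_a * sqnorm g2) (\<lambda>g2 g3. g3 = 0\<^sub>v ny) xi
     = deepc_opt Wp Uf Yf J Uc Yc (\<lambda>a. lambda_a * sqnorm (Proj *\<^sub>v a)) (\<lambda>a. PiPerp *\<^sub>v a = 0\<^sub>v l) xi
   \<and> gamma_ddpc_opt L11 L21 L22 L31 L32 L33 J Uc Yc
        (\<lambda>g1 g2 g3. lambda_a * sqnorm g2) (\<lambda>g2 g3. g3 = 0\<^sub>v ny) xi
     = deepc_opt Wp Uf Yf J Uc Yc (\<lambda>a. lambda_a * sqnorm a) (\<lambda>a. PiPerp *\<^sub>v a = 0\<^sub>v l) xi
   \<and> gamma_ddpc_opt L11 L21 L22 L31 L32 L33 J Uc Yc
        (\<lambda>g1 g2 g3. lambda_a * sqnorm g2) (\<lambda>g2 g3. g3 = 0\<^sub>v ny) xi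
     = spc_opt Wp Uf Yf J Uc Yc
        (\<lambda>xi' u y. lambda_a * wsqnorm R_reg (u - Uf * pinv Wp *\<^sub>v xi')) xi
   \<and> deepc_opt Wp Uf Yf J Uc Yc (\<lambda>a. lambda_a * sqnorm (Proj *\<^sub>v a)) (\<lambda>a. PiPerp *\<^sub>v a = 0\<^sub>v l) xi
     = spc_opt Wp Uf Yf J Uc Yc
        (\<lambda>xi' u y. lambda_a * wsqnorm R_reg (u - Uf * pinv Wp *\<^sub>v xi')) xi"
proof -
  have blocks: "Q1 \<in> carrier_mat nw l" "Q2 \<in> carrier_mat nu l" "Q3 \<in> carrier_mat ny l"
    unfolding Q1_def Q2_def Q3_def row_block_def using Q(1) by auto
  have "Q1 * transpose_mat Q1 = 1\<^sub>m nw" "Q2 * transpose_mat Q2 = 1\<^sub>m nu"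
    unfolding Q1_def Q2_def using row_block_orthonormal[OF Q(1,2)] Q(3) by auto
  moreover have "Q2 * transpose_mat Q1 = 0\<^sub>m nu nw" "Q3 * transpose_mat Q1 = 0\<^sub>m ny nw"
    "Q3 * transpose_mat Q2 = 0\<^sub>m ny nu"
    unfolding Q1_def Q2_def Q3_def using row_blocks_orthogonal[OF Q(1,2)] Q(3) by auto
  ultimately interpret lq_factorization nw nu ny l Q1 Q2 Q3 L11 L21 L22 L31 L32 L33 Wp Uf Yf
    using blocks L11 L22 L33 L21 L31 L32 LQ by unfold_locales auto
  show ?thesis
    unfolding PiPerp_def Proj_def Z_def R_reg_def
    using deepc_eq_gamma_ddpc spc_eq_gamma_ddpc by simp
qed

end
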